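(* In a Gaussian layered relay network with layers $0,1,\dots,L$ (as in the context) operating the amplify-and-forward scheme under the individual power constraints $E[x_k^2]\le P_k^{Up}$ at every relay $k$, the optimal achievable rate $R_{opt}$ satisfies $$R_{opt}\le \min_{l_0=1,2,\dots,L}\ \frac12\log_2\Big(1+\sum_{k\in\mathcal L_{l_0}}P_{R,k}\Big).$$
   Context: Layer $\mathcal L_0=\{S\}$ contains the source, layer $\mathcal L_L=\{D\}$ the destination, and layers $\mathcal L_1,\dots,\mathcal L_{L-1}$ contain relay nodes. Every node $k\in\mathcal L_{l+1}$ receives $y_k=\sum_{j\in\mathcal L_l}h_{j,k}x_j+z_k$, where all channel gains $h_{j,k}$ are fixed positive reals, $x_j$ is the signal sent by node $j$, and the noises $z_k\sim\mathcal N(0,1)$ are independent across non-source nodes and independent of the source signal. The source sends Gaussian codewords with input $x_S\sim\mathcal N(0,P_S)$, $P_S\le P_S^{Up}$. Each relay $k$ transmits $x_k=\beta_k y_k$ with a real amplification gain $\beta_k$ (instantaneous relaying), and the gains must satisfy the power constraints $E[x_k^2]\le P_k^{Up}$. By linearity, $y_D=f_{S,D}x_S+\sum_{j\text{ relay}}f_{j,D}z_j+z_D$ for real coefficients determined by the gains and channel gains, and the achievable rate of a gain choice is $\frac12\log_2\big(1+f_{S,D}^2P_S/(\sum_j f_{j,D}^2+1)\big)$; $R_{opt}$ is the supremum of this rate over all gain choices satisfying the power constraints. For every node $k$ in layer $l\ge1$, $P_{R,k}=\big(\sum_{j\in\mathcal L_{l-1}}h_{j,k}\sqrt{P_j^{Up}}\big)^2$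 (with $P_S^{Up}$ used for the source). *)

theory Defs
  imports Complex_Main
begin

text \<open>Nodes have type 'v, Lay l is the set of
nodes in layer l (Lay 0 = {S}, Lay L = {D}), h j k is the channel gain from j to k,
beta k is the amplification gain of relay k. Each signal is represented by its
linear coefficients: (coefficient of x_S, coefficient of each noise z_i).\<close>

primrec xsig :: "('v \<Rightarrow> real) \<Rightarrow> ('v \<Rightarrow> 'v \<Rightarrow> real) \<Rightarrow> (nat \<Rightarrow> 'v set) \<Rightarrow> nat \<Rightarrow> 'v
                 \<Rightarrow> real \<times> ('v \<Rightarrow> real)" where
  "xsig beta h Lay 0 k = (1, \<lambda>i. 0)"
| "xsig beta h Lay (Suc l) k =
     (beta k * (\<Sum>j\<in>Lay l. h j k * fst (xsig beta h Lay l j)),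
      \<lambda>i. beta k * ((\<Sum>j\<in>Lay l. h j k * snd (xsig beta h Lay l j) i) + (if i = k then 1 else 0)))"

text \<open>Received signal y_k of a node k in layer Suc l: sum over layer l plus own noise z_k.\<close>
definition ysig :: "('v \<Rightarrow> real) \<Rightarrow> ('v \<Rightarrow> 'v \<Rightarrow> real) \<Rightarrow> (nat \<Rightarrow> 'v set) \<Rightarrow> nat \<Rightarrow> 'v
                 \<Rightarrow> real \<times> ('v \<Rightarrow> real)" where
  "ysig beta h Lay l k =
     ((\<Sum>j\<in>Lay l. h j k * fst (xsig beta h Lay l j)),
      \<lambda>i. (\<Sum>j\<in>Lay l. h j k * snd (xsig beta h Lay l j) i) + (if i = k then 1 else 0))"

definition noise_nodes :: "(nat \<Rightarrow> 'v set) \<Rightarrow> nat \<Rightarrow> 'v set" where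
  "noise_nodes Lay L = (\<Union>l\<in>{1..L}. Lay l)"

definition relay_nodes :: "(nat \<Rightarrow> 'v set) \<Rightarrow> nat \<Rightarrow> 'v set" where
  "relay_nodes Lay L = (\<Union>l\<in>{1..<L}. Lay l)"

text \<open>Second moment E[x^2] of a linear combination a x_S + sum_i b_i z_i
  (x_S ~ N(0,PS), z_i ~ N(0,1) independent).\<close>
definition power :: "real \<Rightarrow> 'v set \<Rightarrow> real \<times> ('v \<Rightarrow> real) \<Rightarrow> real" where
  "power PS N c = (fst c)\<^sup>2 * PS + (\<Sum>i\<in>N. (snd c i)\<^sup>2)"

definition feasible :: "('v \<Rightarrow> 'v \<Rightarrow> real) \<Rightarrow> (nat \<Rightarrow> 'v set) \<Rightarrow> nat \<Rightarrow> ('v \<Rightarrow> real) \<Rightarrow> real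
                        \<Rightarrow> ('v \<Rightarrow> real) \<Rightarrow> bool" where
  "feasible h Lay L Pup PS beta \<longleftrightarrow>
     (\<forall>l\<in>{1..<L}. \<forall>k\<in>Lay l. power PS (noise_nodes Lay L) (xsig beta h Lay l k) \<le> Pup k)"

text \<open>Rate of a gain choice: y_D = f_SD x_S + sum_relays f_jD z_j + z_D.\<close>
definition rate :: "('v \<Rightarrow> 'v \<Rightarrow> real) \<Rightarrow> (nat \<Rightarrow> 'v set) \<Rightarrow> nat \<Rightarrow> 'v \<Rightarrow> real
                    \<Rightarrow> ('v \<Rightarrow> real) \<Rightarrow> real" where
  "rate h Lay L D PS beta =
     (let c = ysig beta h Lay (L - 1) D in
      1/2 * log 2 (1 + (fst c)\<^sup>2 * PS / ((\<Sum>j\<in>relay_nodes Lay L. (snd c j)\<^sup>2) + 1)))"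

definition R_opt :: "('v \<Rightarrow> 'v \<Rightarrow> real) \<Rightarrow> (nat \<Rightarrow> 'v set) \<Rightarrow> nat \<Rightarrow> 'v \<Rightarrow> ('v \<Rightarrow> real) \<Rightarrow> real
                     \<Rightarrow> real" where
  "R_opt h Lay L D Pup PS = Sup {rate h Lay L D PS beta | beta. feasible h Lay L Pup PS beta}"

text \<open>P_{R,k} for k in layer l \<ge> 1 (Pup S plays the role of P_S^Up).\<close>
definition P_R :: "('v \<Rightarrow> 'v \<Rightarrow> real) \<Rightarrow> (nat \<Rightarrow> 'v set) \<Rightarrow> ('v \<Rightarrow> real) \<Rightarrow> nat \<Rightarrow> 'v \<Rightarrow> real" where
  "P_R h Lay Pup l k = (\<Sum>j\<in>Lay (l - 1). h j k * sqrt (Pup j))\<^sup>2"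

end

theory Submission
  imports Defs "HOL-Analysis.Convex"
begin

text \<open>By the power constraints of layer \<open>l\<^sub>0 - 1\<close> and the
  triangle inequality, the source component of the signal received by \<open>k \<in> \<L>\<^sub>l\<^sub>0\<close> has power at most
  \<open>P\<^sub>R\<^sub>,\<^sub>k\<close>; by Cauchy-Schwarz, every linear combination of these received signals has a
  signal-to-noise ratio at most \<open>T = \<Sum>\<^sub>k P\<^sub>R\<^sub>,\<^sub>k\<close> with respect to the noises \<open>z\<^sub>k\<close> injected at \<open>\<L>\<^sub>l\<^sub>0\<close>.
  Amplify-and-forward only forms further linear combinations and adds fresh noise, so this bound
  propagates layer by layer to \<open>y\<^sub>D\<close>, where the noise counted is part of the rate's denominator.\<close>

lemma xsig_Suc:
  "xsig beta h Lay (Suc l) k = (beta k * fst (ysig beta h Lay l k), \<lambda>i. beta k * snd (ysig beta h Lay l k) i)"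
  by (simp add: ysig_def)

lemma snd_xsig_eq_0:
  "k \<in> Lay l \<Longrightarrow> i \<notin> (\<Union>l'\<in>{1..l}. Lay l') \<Longrightarrow> snd (xsig beta h Lay l k) i = 0"
proof (induction l arbitrary: k)
  case 0
  then show ?case by simp
next
  case (Suc l)
  then have "i \<noteq> k" and "\<And>j. j \<in> Lay l \<Longrightarrow> snd (xsig beta h Lay l j) i = 0"
    by auto
  then show ?case by simp
qed

lemma snd_ysig_fresh:
  "i \<notin> (\<Union>l'\<in>{1..l}. Lay l') \<Longrightarrow> snd (ysig beta h Lay l k) i = (if i = k then 1 else 0)"
  by (simp add: ysig_def snd_xsig_eq_0)

lemma sum_fst_ysig_Suc:
  "(\<Sum>k\<in>K. d k * fst (ysig beta h Lay (Suc l) k))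
   = (\<Sum>j\<in>Lay (Suc l). (beta j * (\<Sum>k\<in>K. d k * h j k)) * fst (ysig beta h Lay l j))"
  unfolding ysig_def[of _ _ _ "Suc l"] xsig_Suc
  by (simp add: sum_distrib_left sum_distrib_right sum.swap[of _ K] mult_ac)

lemma sum_snd_ysig_Suc:
  "(\<Sum>k\<in>K. d k * snd (ysig beta h Lay (Suc l) k) i)
   = (\<Sum>j\<in>Lay (Suc l). (beta j * (\<Sum>k\<in>K. d k * h j k)) * snd (ysig beta h Lay l j) i)
     + (\<Sum>k\<in>K. d k * (if i = k then 1 else 0))"
  unfolding ysig_def[of _ _ _ "Suc l"] xsig_Suc
  by (simp add: sum_distrib_left sum_distrib_right sum.swap[of _ K] mult_ac distrib_left sum.distrib)

definition snr_bound ::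
    "('v \<Rightarrow> real) \<Rightarrow> ('v \<Rightarrow> 'v \<Rightarrow> real) \<Rightarrow> (nat \<Rightarrow> 'v set) \<Rightarrow> real \<Rightarrow> real \<Rightarrow> nat \<Rightarrow> nat \<Rightarrow> bool" where
  "snr_bound beta h Lay PS T p n \<longleftrightarrow>
     (\<forall>d. (\<Sum>k\<in>Lay (Suc n). d k * fst (ysig beta h Lay n k))\<^sup>2 * PS
          \<le> T * (\<Sum>i\<in>(\<Union>l\<in>{Suc p..Suc n}. Lay l). (\<Sum>k\<in>Lay (Suc n). d k * snd (ysig beta h Lay n k) i)\<^sup>2))"

lemma snr_bound_Suc:
  fixes Lay :: "nat \<Rightarrow> 'v set"
  assumes fin: "\<And>l. l \<le> L \<Longrightarrow> finite (Lay l)"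
    and disj: "\<And>l l'. l \<le> L \<Longrightarrow> l' \<le> L \<Longrightarrow> l \<noteq> l' \<Longrightarrow> Lay l \<inter> Lay l' = {}"
    and T: "0 \<le> T" and nL: "Suc (Suc n) \<le> L"
    and bound: "snr_bound beta h Lay PS T p n"
  shows "snr_bound beta h Lay PS T p (Suc n)"
  unfolding snr_bound_def
proof
  fix d :: "'v \<Rightarrow> real"
  let ?K = "Lay (Suc (Suc n))"
  let ?N = "\<Union>l\<in>{Suc p..Suc n}. Lay l"
  let ?N' = "\<Union>l\<in>{Suc p..Suc (Suc n)}. Lay l"
  let ?z = "\<lambda>i. \<Sum>k\<in>?K. d k * snd (ysig beta h Lay (Suc n) k) i"
  define c where "c j = beta j * (\<Sum>k\<in>?K. d k * h j k)" for j
  have signal: "(\<Sum>k\<in>?K. d k * fst (ysig beta h Lay (Suc n) k))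
      = (\<Sum>j\<in>Lay (Suc n). c j * fst (ysig beta h Lay n j))"
    unfolding c_def by (rule sum_fst_ysig_Suc)
  have noise: "?z i = (\<Sum>j\<in>Lay (Suc n). c j * snd (ysig beta h Lay n j) i)" if i: "i \<in> ?N" for i
  proof -
    obtain l where "l \<in> {Suc p..Suc n}" "i \<in> Lay l"
      using i by blast
    then have "i \<notin> ?K"
      using disj[of "Suc (Suc n)" l] nL by auto
    then have "(\<Sum>k\<in>?K. d k * (if i = k then 1 else 0)) = 0"
      by (intro sum.neutral) auto
    then show ?thesis
      unfolding c_def by (simp add: sum_snd_ysig_Suc)
  qed
  have "(\<Sum>k\<in>?K. d k * fst (ysig beta h Lay (Suc n) k))\<^sup>2 * PS
      \<le> T * (\<Sum>i\<in>?N. (\<Sum>j\<in>Lay (Suc n). c j * snd (ysig beta h Lay n j) i)\<^sup>2)"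
    using bound unfolding snr_bound_def signal by blast
  also have "\<dots> = T * (\<Sum>i\<in>?N. (?z i)\<^sup>2)"
    by (simp add: noise)
  also have "\<dots> \<le> T * (\<Sum>i\<in>?N'. (?z i)\<^sup>2)"
    using fin nL T by (intro mult_left_mono sum_mono2) (auto simp: le_Suc_eq)
  finally show "(\<Sum>k\<in>?K. d k * fst (ysig beta h Lay (Suc n) k))\<^sup>2 * PS \<le> T * (\<Sum>i\<in>?N'. (?z i)\<^sup>2)" .
qed

lemma snr_bound_propagate:
  fixes Lay :: "nat \<Rightarrow> 'v set"
  assumes fin: "\<And>l. l \<le> L \<Longrightarrow> finite (Lay l)"
    and disj: "\<And>l l'. l \<le> L \<Longrightarrow> l' \<le> L \<Longrightarrow> l \<noteq> l' \<Longrightarrow> Lay l \<inter> Lay l' = {}"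
    and T: "0 \<le> T" and pn: "p \<le> n" and nL: "Suc n \<le> L"
    and bound: "snr_bound beta h Lay PS T p p"
  shows "snr_bound beta h Lay PS T p n"
  using pn nL
proof (induction n rule: dec_induct)
  case base
  from bound show ?case .
next
  case (step n)
  then show ?case
    using snr_bound_Suc[OF fin disj T] by simp
qed

lemma fst_xsig_power_le_Pup:
  assumes feas: "feasible h Lay L Pup PS beta"
    and src: "Lay 0 = {S}" and PS: "PS \<le> Pup S"
    and p: "p < L" and j: "j \<in> Lay p"
  shows "(fst (xsig beta h Lay p j))\<^sup>2 * PS \<le> Pup j"
proof (cases p)
  case 0
  then show ?thesis using j src PS by simp
next
  case (Suc q)
  then have "p \<in> {1..<L}"
    using p by simp
  then have "power PS (noise_nodes Lay L) (xsig beta h Lay p j) \<le> Pup j"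
    using feas j unfolding feasible_def by blast
  moreover have "0 \<le> (\<Sum>i\<in>noise_nodes Lay L. (snd (xsig beta h Lay p j) i)\<^sup>2)"
    by (simp add: sum_nonneg)
  ultimately show ?thesis
    unfolding power_def by linarith
qed

lemma fst_ysig_power_le_P_R:
  assumes feas: "feasible h Lay L Pup PS beta"
    and src: "Lay 0 = {S}" and PS: "0 \<le> PS" "PS \<le> Pup S"
    and h: "\<And>j. h j k \<ge> 0" and l: "Suc l \<le> L"
  shows "(fst (ysig beta h Lay l k))\<^sup>2 * PS \<le> P_R h Lay Pup (Suc l) k"
proof -
  let ?x = "\<lambda>j. fst (xsig beta h Lay l j)"
  let ?s = "\<Sum>j\<in>Lay l. h j k * sqrt (Pup j)"
  have x: "\<bar>?x j\<bar> * sqrt PS \<le> sqrt (Pup j)" if "j \<in> Lay l" for j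
    using real_sqrt_le_mono[OF fst_xsig_power_le_Pup[OF feas src PS(2) _ that]] l
    by (simp add: real_sqrt_mult)
  have "\<bar>fst (ysig beta h Lay l k)\<bar> * sqrt PS \<le> (\<Sum>j\<in>Lay l. h j k * \<bar>?x j\<bar>) * sqrt PS"
    unfolding ysig_def using sum_abs[of "\<lambda>j. h j k * ?x j" "Lay l"] h PS(1)
    by (intro mult_right_mono) (auto simp: abs_mult)
  also have "\<dots> = (\<Sum>j\<in>Lay l. h j k * (\<bar>?x j\<bar> * sqrt PS))"
    by (simp add: sum_distrib_left sum_distrib_right mult_ac)
  also have "\<dots> \<le> ?s"
    using x h by (intro sum_mono mult_left_mono) auto
  finally have "(\<bar>fst (ysig beta h Lay l k)\<bar> * sqrt PS)\<^sup>2 \<le> ?s\<^sup>2"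
    using PS(1) by (intro power_mono) auto
  then show ?thesis
    using PS(1) by (simp add: P_R_def power_mult_distrib)
qed

lemma snr_bound_first_layer:
  fixes Lay :: "nat \<Rightarrow> 'v set"
  assumes feas: "feasible h Lay L Pup PS beta"
    and fin: "\<And>l. l \<le> L \<Longrightarrow> finite (Lay l)"
    and disj: "\<And>l l'. l \<le> L \<Longrightarrow> l' \<le> L \<Longrightarrow> l \<noteq> l' \<Longrightarrow> Lay l \<inter> Lay l' = {}"
    and src: "Lay 0 = {S}" and PS: "0 \<le> PS" "PS \<le> Pup S"
    and h: "\<And>j k. h j k \<ge> 0" and p: "Suc p \<le> L"
  shows "snr_bound beta h Lay PS (\<Sum>k\<in>Lay (Suc p). P_R h Lay Pup (Suc p) k) p p"
  unfolding snr_bound_def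
proof
  fix d :: "'v \<Rightarrow> real"
  let ?K = "Lay (Suc p)"
  let ?y = "\<lambda>k. fst (ysig beta h Lay p k)"
  have noise: "(\<Sum>k\<in>?K. d k * snd (ysig beta h Lay p k) i) = d i" if i: "i \<in> ?K" for i
  proof -
    have "i \<notin> Lay l'" if "l' \<in> {1..p}" for l'
      using i disj[of "Suc p" l'] p that by auto
    then have "i \<notin> (\<Union>l'\<in>{1..p}. Lay l')"
      by blast
    then have "(\<Sum>k\<in>?K. d k * snd (ysig beta h Lay p k) i) = (\<Sum>k\<in>?K. if i = k then d k else 0)"
      by (intro sum.cong) (simp_all add: snd_ysig_fresh)
    then show ?thesis
      using i fin[OF p] by simp
  qed
  have "(\<Sum>k\<in>?K. d k * ?y k)\<^sup>2 * PS \<le> (\<Sum>k\<in>?K. (d k)\<^sup>2) * (\<Sum>k\<in>?K. (?y k)\<^sup>2) * PS"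
    using PS(1) by (intro mult_right_mono Cauchy_Schwarz_ineq_sum) auto
  also have "\<dots> = (\<Sum>k\<in>?K. (d k)\<^sup>2) * (\<Sum>k\<in>?K. (?y k)\<^sup>2 * PS)"
    by (simp add: sum_distrib_right mult.assoc)
  also have "\<dots> \<le> (\<Sum>k\<in>?K. (d k)\<^sup>2) * (\<Sum>k\<in>?K. P_R h Lay Pup (Suc p) k)"
    using fst_ysig_power_le_P_R[OF feas src PS h p]
    by (intro mult_left_mono sum_mono sum_nonneg) auto
  finally show "(\<Sum>k\<in>?K. d k * ?y k)\<^sup>2 * PS
      \<le> (\<Sum>k\<in>?K. P_R h Lay Pup (Suc p) k)
        * (\<Sum>i\<in>(\<Union>l\<in>{Suc p..Suc p}. Lay l). (\<Sum>k\<in>?K. d k * snd (ysig beta h Lay p k) i)\<^sup>2)"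
    by (simp add: noise mult.commute)
qed

lemma destination_snr_le:
  fixes Lay :: "nat \<Rightarrow> 'v set"
  assumes fin: "\<And>l. l \<le> L \<Longrightarrow> finite (Lay l)"
    and disj: "\<And>l l'. l \<le> L \<Longrightarrow> l' \<le> L \<Longrightarrow> l \<noteq> l' \<Longrightarrow> Lay l \<inter> Lay l' = {}"
    and dst: "Lay L = {D}" and T: "0 \<le> T" and p: "Suc p \<le> L"
    and bound: "snr_bound beta h Lay PS T p (L - 1)"
  shows "(fst (ysig beta h Lay (L - 1) D))\<^sup>2 * PS
         \<le> T * ((\<Sum>j\<in>relay_nodes Lay L. (snd (ysig beta h Lay (L - 1) D) j)\<^sup>2) + 1)"
proof -
  let ?R = "relay_nodes Lay L"
  let ?b = "snd (ysig beta h Lay (L - 1) D)"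
  have L: "Suc (L - 1) = L" using p by simp
  have finR: "finite ?R"
    unfolding relay_nodes_def using fin by auto
  have D_notin: "D \<notin> Lay l" if "l \<noteq> L" "l \<le> L" for l
    using disj[of L l] dst that by auto
  then have DR: "D \<notin> ?R"
    unfolding relay_nodes_def by auto
  have "D \<notin> (\<Union>l\<in>{1..L - 1}. Lay l)"
    using D_notin p by auto
  then have noise_D: "?b D = 1"
    by (simp add: snd_ysig_fresh)
  have N: "(\<Union>l\<in>{Suc p..L}. Lay l) \<subseteq> insert D ?R"
  proof
    fix i assume "i \<in> (\<Union>l\<in>{Suc p..L}. Lay l)"
    then obtain l where "l \<in> {Suc p..L}" "i \<in> Lay l" by blast
    then show "i \<in> insert D ?R"
      using dst unfolding relay_nodes_def by (cases "l = L") auto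
  qed
  have "(fst (ysig beta h Lay (L - 1) D))\<^sup>2 * PS \<le> T * (\<Sum>i\<in>(\<Union>l\<in>{Suc p..L}. Lay l). (?b i)\<^sup>2)"
    using bound[unfolded snr_bound_def, rule_format, of "\<lambda>_. 1"] dst L by simp
  also have "\<dots> \<le> T * (\<Sum>i\<in>insert D ?R. (?b i)\<^sup>2)"
    using finR N T by (intro mult_left_mono sum_mono2) auto
  also have "\<dots> = T * ((\<Sum>j\<in>?R. (?b j)\<^sup>2) + 1)"
    using finR DR noise_D by simp
  finally show ?thesis .
qed

lemma rate_le_cut:
  fixes Lay :: "nat \<Rightarrow> 'v set"
  assumes feas: "feasible h Lay L Pup PS beta"
    and fin: "\<And>l. l \<le> L \<Longrightarrow> finite (Lay l)"
    and disj: "\<And>l l'. l \<le> L \<Longrightarrow> l' \<le> L \<Longrightarrow> l \<noteq> l' \<Longrightarrow> Lay l \<inter> Lay l' = {}"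
    and src: "Lay 0 = {S}" and dst: "Lay L = {D}" and PS: "0 \<le> PS" "PS \<le> Pup S"
    and h: "\<And>j k. h j k \<ge> 0" and l0: "l0 \<in> {1..L}"
  shows "rate h Lay L D PS beta \<le> 1/2 * log 2 (1 + (\<Sum>k\<in>Lay l0. P_R h Lay Pup l0 k))"
proof -
  obtain p where l0p: "l0 = Suc p" and p: "Suc p \<le> L"
    using l0 by (cases l0) auto
  define T where "T = (\<Sum>k\<in>Lay l0. P_R h Lay Pup l0 k)"
  define den where "den = (\<Sum>j\<in>relay_nodes Lay L. (snd (ysig beta h Lay (L - 1) D) j)\<^sup>2) + 1"
  let ?S = "(fst (ysig beta h Lay (L - 1) D))\<^sup>2 * PS"
  have T: "0 \<le> T"
    unfolding T_def P_R_def by (simp add: sum_nonneg)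
  have "snr_bound beta h Lay PS T p p"
    unfolding T_def l0p using snr_bound_first_layer[OF feas fin disj src PS h p] .
  then have "snr_bound beta h Lay PS T p (L - 1)"
    using snr_bound_propagate[OF fin disj T] p by simp
  then have "?S \<le> T * den"
    unfolding den_def using destination_snr_le[where Lay=Lay and L=L, OF fin disj dst T p] by blast
  moreover have "1 \<le> den"
    unfolding den_def by (simp add: sum_nonneg)
  ultimately have "?S / den \<le> T" and "0 \<le> ?S / den"
    using PS(1) by (simp_all add: divide_le_eq)
  then have "log 2 (1 + ?S / den) \<le> log 2 (1 + T)"
    by simp
  then show ?thesis
    unfolding rate_def Let_def den_def[symmetric] T_def by simp
qed

lemma feasible_zero_gains:
  assumes "\<And>k. Pup k \<ge> 0"
  shows "feasible h Lay L Pup PS (\<lambda>_. 0)"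
  unfolding feasible_def
proof (intro ballI)
  fix l k assume "l \<in> {1..<L}"
  then obtain q where "l = Suc q" by (cases l) auto
  then show "power PS (noise_nodes Lay L) (xsig (\<lambda>_. 0) h Lay l k) \<le> Pup k"
    using assms by (simp add: power_def)
qed

theorem theorem1:
  fixes Lay :: "nat \<Rightarrow> 'v set" and L :: nat and S D :: 'v
    and h :: "'v \<Rightarrow> 'v \<Rightarrow> real" and Pup :: "'v \<Rightarrow> real" and PS :: real
  assumes L: "L \<ge> 1"
    and fin: "\<And>l. l \<le> L \<Longrightarrow> finite (Lay l)"
    and disj: "\<And>l l'. l \<le> L \<Longrightarrow> l' \<le> L \<Longrightarrow> l \<noteq> l' \<Longrightarrow> Lay l \<inter> Lay l' = {}"
    and src: "Lay 0 = {S}" and dst: "Lay L = {D}"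
    and hpos: "\<And>j k. h j k > 0"
    and Pup_nonneg: "\<And>k. Pup k \<ge> 0"
    and PS: "0 \<le> PS" "PS \<le> Pup S"
  shows "R_opt h Lay L D Pup PS
           \<le> Min ((\<lambda>l0. 1/2 * log 2 (1 + (\<Sum>k\<in>Lay l0. P_R h Lay Pup l0 k))) ` {1..L})"
proof (rule Min.boundedI)
  show "(\<lambda>l0. 1/2 * log 2 (1 + (\<Sum>k\<in>Lay l0. P_R h Lay Pup l0 k))) ` {1..L} \<noteq> {}"
    using L by simp
next
  fix a assume "a \<in> (\<lambda>l0. 1/2 * log 2 (1 + (\<Sum>k\<in>Lay l0. P_R h Lay Pup l0 k))) ` {1..L}"
  then obtain l0 where l0: "l0 \<in> {1..L}"
    and a: "a = 1/2 * log 2 (1 + (\<Sum>k\<in>Lay l0. P_R h Lay Pup l0 k))"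
    by blast
  have h: "\<And>j k. h j k \<ge> 0"
    using hpos less_imp_le by blast
  have "rate h Lay L D PS beta \<le> a" if "feasible h Lay L Pup PS beta" for beta
    unfolding a using rate_le_cut[OF that fin disj src dst PS h l0] .
  moreover have "feasible h Lay L Pup PS (\<lambda>_. 0)"
    using Pup_nonneg by (rule feasible_zero_gains)
  ultimately show "R_opt h Lay L D Pup PS \<le> a"
    unfolding R_opt_def by (intro cSup_least) auto
qed (simp)

end
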